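(* Let $\bm{L}\in\mathbb{R}^{m\times n}$ have rank $r$ and compact SVD $\bm{L}=\bm{W}_{\bm{L}}\bm{\Sigma}_{\bm{L}}\bm{V}_{\bm{L}}^T$, and suppose $\bm{L}$ is $\{\mu_1(\bm{L}),\mu_2(\bm{L})\}$-incoherent, i.e. \[\max_{i}\|\bm{W}_{\bm{L}}^T\bm{e}_i\|_2\leq\sqrt{\tfrac{\mu_1(\bm{L}) r}{m}}\quad\text{and}\quad\max_{i}\|\bm{V}_{\bm{L}}^T\bm{e}_i\|_2\leq\sqrt{\tfrac{\mu_2(\bm{L}) r}{n}}.\] Let $J\subseteq[n]$ be such that $\bm{C}=\bm{L}(:,J)\in\mathbb{R}^{m\times|J|}$ has rank $r$, let $\bm{C}=\bm{W}_{\bm{C}}\bm{\Sigma}_{\bm{C}}\bm{V}_{\bm{C}}^T$ be its compact SVD, and set $\beta:=\sqrt{\frac{|J|}{n}}\,\|\bm{V}_{\bm{L}}(J,:)^\dagger\|_2$. Then \begin{enumerate} \item $\max_i\|\bm{W}_{\bm{C}}^T\bm{e}_i\|_2\leq\sqrt{\frac{\mu_1(\bm{L}) r}{m}}$, \item $\max_i\|\bm{V}_{\bm{C}}^T\bm{e}_i\|_2\leq\beta\,\kappa(\bm{L})\sqrt{\frac{\mu_2(\bm{L}) r}{|J|}}$, \item $\kappa(\bm{C})\leq\beta\sqrt{\mu_2(\bm{L}) r}\,\kappa(\bm{L})$. \end{enumerate} In particular, $\bm{C}$ satisfies the incoherence inequalities with parameters $\mu_1(\bm{C})\leq\mu_1(\bm{L})$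 and $\mu_2(\bm{C})\leq\beta^2\kappa(\bm{L})^2\mu_2(\bm{L})$ (where for $\bm{C}$ the dimensions $m,n$ in the incoherence inequalities are replaced by $m,|J|$).
   Context: $[n]=\{1,\dots,n\}$. For a matrix $\bm{A}$, $\bm{A}(I,J)$ denotes the submatrix with row indices $I$ and column indices $J$ (":" meaning all indices), $\bm{A}^\dagger$ is the Moore–Penrose pseudoinverse, and $\kappa(\bm{A})=\|\bm{A}\|_2\|\bm{A}^\dagger\|_2=\sigma_{\max}(\bm{A})/\sigma_{\min}(\bm{A})$, with $\sigma_{\min}$ the smallest nonzero singular value. $\bm{e}_i$ is the $i$-th canonical basis vector of the appropriate dimension. A rank-$r$ matrix $\bm{A}\in\mathbb{R}^{p\times q}$ with compact SVD $\bm{W}_{\bm{A}}\bm{\Sigma}_{\bm{A}}\bm{V}_{\bm{A}}^T$ is called $\{\mu_1,\mu_2\}$-incoherent if $\max_i\|\bm{W}_{\bm{A}}^T\bm{e}_i\|_2\le\sqrt{\mu_1 r/p}$ and $\max_i\|\bm{V}_{\bm{A}}^T\bm{e}_i\|_2\le\sqrt{\mu_2 r/q}$. *)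

theory Defs
  imports Complex_Main "Jordan_Normal_Form.DL_Rank_Submatrix"
begin

definition vnorm :: "real vec \<Rightarrow> real" where
  "vnorm v = sqrt (\<Sum>i<dim_vec v. (v $ i)^2)"

text \<open>Spectral norm (operator 2-norm); the 0 is inserted only so that the
  supremum is also well defined for matrices with no columns.\<close>
definition spec_norm :: "real mat \<Rightarrow> real" where
  "spec_norm A = Sup (insert 0 {vnorm (A *\<^sub>v x) | x. x \<in> carrier_vec (dim_col A) \<and> vnorm x = 1})"

definition pinv :: "real mat \<Rightarrow> real mat" where
  "pinv A = (THE X. X \<in> carrier_mat (dim_col A) (dim_row A) \<and>
      A * X * A = A \<and> X * A * X = X \<and>
      transpose_mat (A * X) = A * X \<and> transpose_mat (X * A) = X * A)"

definition cond_num :: "real mat \<Rightarrow> real" where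
  "cond_num A = spec_norm A * spec_norm (pinv A)"

definition compact_svd :: "real mat \<Rightarrow> nat \<Rightarrow> real mat \<Rightarrow> real mat \<Rightarrow> real mat \<Rightarrow> bool" where
  "compact_svd A r W S V \<longleftrightarrow>
     W \<in> carrier_mat (dim_row A) r \<and> S \<in> carrier_mat r r \<and> V \<in> carrier_mat (dim_col A) r \<and>
     transpose_mat W * W = 1\<^sub>m r \<and> transpose_mat V * V = 1\<^sub>m r \<and>
     diagonal_mat S \<and> (\<forall>i<r. 0 < S $$ (i,i)) \<and>
     (\<forall>i j. i \<le> j \<longrightarrow> j < r \<longrightarrow> S $$ (j,j) \<le> S $$ (i,i)) \<and>
     A = W * S * transpose_mat V"

end

theory Submission
  imports Defs "HOL-Analysis.L2_Norm"
begin

text \<open>Write C = WL SL VJ^T with VJ = VL(J,:). Since C and L have the same column space,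
  WC = WL N for an orthogonal r \<times> r matrix N, so the rows of WC have the same norms as
  those of WL. Multiplying C = WC SC VC^T by WC^T gives SC VC^T = N^T SL VJ^T, so a row of
  VC is at most \<parallel>pinv C\<parallel> \<parallel>L\<parallel> times the corresponding row of VJ, which is a row of VL.
  Transposing instead gives VC SC = VJ SL N, whence \<parallel>v\<parallel> \<le> \<parallel>pinv L\<parallel> \<parallel>pinv VJ\<parallel> \<parallel>SC v\<parallel>,
  i.e. \<parallel>pinv C\<parallel> \<le> \<parallel>pinv L\<parallel> \<parallel>pinv VJ\<parallel>. Finally \<parallel>C\<parallel> \<le> \<parallel>L\<parallel> \<parallel>VJ\<parallel>_F, and incoherence
  bounds the Frobenius norm \<parallel>VJ\<parallel>_F by sqrt (|J| \<mu>2 r / n).\<close>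

lemma vnorm_nonneg [simp]: "0 \<le> vnorm v"
  unfolding vnorm_def by (simp add: sum_nonneg)

lemma vnorm_square: "(vnorm v)\<^sup>2 = v \<bullet> v"
  unfolding vnorm_def scalar_prod_def
  by (simp add: sum_nonneg power2_eq_square atLeast0LessThan)

lemma abs_scalar_prod_le_vnorm:
  assumes "dim_vec v = dim_vec w"
  shows "\<bar>v \<bullet> w\<bar> \<le> vnorm v * vnorm w"
proof -
  have "\<bar>v \<bullet> w\<bar> \<le> (\<Sum>i<dim_vec w. \<bar>v $ i\<bar> * \<bar>w $ i\<bar>)"
    unfolding scalar_prod_def atLeast0LessThan
    by (rule order_trans[OF sum_abs]) (simp add: abs_mult)
  also have "\<dots> \<le> L2_set (\<lambda>i. v $ i) {..<dim_vec v} * L2_set (\<lambda>i. w $ i) {..<dim_vec w}"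
    unfolding assms by (rule L2_set_mult_ineq)
  finally show ?thesis
    unfolding vnorm_def L2_set_def by simp
qed

lemma vnorm_smult: "vnorm (a \<cdot>\<^sub>v v) = \<bar>a\<bar> * vnorm v"
proof -
  have "vnorm (a \<cdot>\<^sub>v v) = sqrt (a\<^sup>2 * (\<Sum>i<dim_vec v. (v $ i)\<^sup>2))"
    unfolding vnorm_def by (simp add: power_mult_distrib sum_distrib_left)
  thus ?thesis
    unfolding vnorm_def by (simp add: real_sqrt_mult)
qed

lemma vnorm_eq_0_iff: "vnorm v = 0 \<longleftrightarrow> v = 0\<^sub>v (dim_vec v)"
proof
  assume "vnorm v = 0"
  hence "(\<Sum>i<dim_vec v. (v $ i)\<^sup>2) = 0"
    unfolding vnorm_def by simp
  hence "\<forall>i<dim_vec v. (v $ i)\<^sup>2 = 0"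
    by (subst (asm) sum_nonneg_eq_0_iff) auto
  thus "v = 0\<^sub>v (dim_vec v)"
    by (intro eq_vecI) auto
next
  assume "v = 0\<^sub>v (dim_vec v)"
  hence "\<And>i. i < dim_vec v \<Longrightarrow> v $ i = 0"
    by (metis index_zero_vec(1))
  thus "vnorm v = 0"
    by (simp add: vnorm_def)
qed

definition frobenius_sq :: "real mat \<Rightarrow> real" where
  "frobenius_sq A = (\<Sum>i<dim_row A. (vnorm (row A i))\<^sup>2)"

lemma frobenius_sq_nonneg [simp]: "0 \<le> frobenius_sq A"
  unfolding frobenius_sq_def by (simp add: sum_nonneg)

lemma frobenius_sq_entries: "frobenius_sq A = (\<Sum>i<dim_row A. \<Sum>j<dim_col A. (A $$ (i, j))\<^sup>2)"
  unfolding frobenius_sq_def vnorm_def by (intro sum.cong refl) (simp add: sum_nonneg)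

lemma frobenius_sq_transpose: "frobenius_sq (transpose_mat A) = frobenius_sq A"
  unfolding frobenius_sq_entries by (simp add: sum.swap[of _ "{..<dim_row A}"])

lemma frobenius_sq_le_rows:
  fixes c :: real
  assumes "\<And>i. i < dim_row A \<Longrightarrow> vnorm (row A i) \<le> sqrt c"
  shows "frobenius_sq A \<le> dim_row A * c"
proof -
  have "(vnorm (row A i))\<^sup>2 \<le> c" if "i < dim_row A" for i
  proof -
    have "0 \<le> sqrt c"
      using assms[OF that] vnorm_nonneg order_trans by blast
    with power_mono[OF assms[OF that] vnorm_nonneg, of 2] show ?thesis
      by simp
  qed
  hence "frobenius_sq A \<le> (\<Sum>i<dim_row A. c)"
    unfolding frobenius_sq_def by (intro sum_mono) simp
  thus ?thesis
    by simp
qed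

lemma vnorm_mult_vec_le_frobenius:
  assumes "x \<in> carrier_vec (dim_col A)"
  shows "vnorm (A *\<^sub>v x) \<le> sqrt (frobenius_sq A) * vnorm x"
proof -
  have "(vnorm (A *\<^sub>v x))\<^sup>2 = (\<Sum>i<dim_row A. (row A i \<bullet> x)\<^sup>2)"
    unfolding vnorm_def by (simp add: sum_nonneg)
  also have "\<dots> \<le> (\<Sum>i<dim_row A. (vnorm (row A i) * vnorm x)\<^sup>2)"
  proof (intro sum_mono)
    fix i assume "i \<in> {..<dim_row A}"
    hence "\<bar>row A i \<bullet> x\<bar> \<le> \<bar>vnorm (row A i) * vnorm x\<bar>"
      using assms abs_scalar_prod_le_vnorm[of "row A i" x] by simp
    thus "(row A i \<bullet> x)\<^sup>2 \<le> (vnorm (row A i) * vnorm x)\<^sup>2"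
      by (simp only: abs_le_square_iff)
  qed
  also have "\<dots> = (sqrt (frobenius_sq A) * vnorm x)\<^sup>2"
    unfolding frobenius_sq_def by (simp add: power_mult_distrib sum_distrib_right sum_nonneg)
  finally show ?thesis
    by (rule power2_le_imp_le) simp
qed

lemma spec_norm_bdd_above:
  "bdd_above (insert 0 {vnorm (A *\<^sub>v x) | x. x \<in> carrier_vec (dim_col A) \<and> vnorm x = 1})"
proof (rule bdd_aboveI)
  fix y assume "y \<in> insert 0 {vnorm (A *\<^sub>v x) | x. x \<in> carrier_vec (dim_col A) \<and> vnorm x = 1}"
  then consider "y = 0" | x where "x \<in> carrier_vec (dim_col A)" "vnorm x = 1" "y = vnorm (A *\<^sub>v x)"
    by blast
  thus "y \<le> sqrt (frobenius_sq A)"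
  proof cases
    case 1
    thus ?thesis
      by simp
  next
    case 2
    thus ?thesis
      using vnorm_mult_vec_le_frobenius[of x A] by simp
  qed
qed

lemma spec_norm_nonneg: "0 \<le> spec_norm A"
  unfolding spec_norm_def by (rule cSup_upper[OF _ spec_norm_bdd_above]) simp

lemma vnorm_mult_vec_le_spec_norm:
  assumes x: "x \<in> carrier_vec (dim_col A)"
  shows "vnorm (A *\<^sub>v x) \<le> spec_norm A * vnorm x"
proof (cases "vnorm x = 0")
  case True
  hence "A *\<^sub>v x = 0\<^sub>v (dim_row A)"
    using x vnorm_eq_0_iff[of x] by auto
  thus ?thesis
    using True by (simp add: vnorm_def)
next
  case False
  hence pos: "0 < vnorm x"
    using vnorm_nonneg[of x] by linarith
  let ?y = "(1 / vnorm x) \<cdot>\<^sub>v x"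
  have "vnorm (A *\<^sub>v ?y) \<le> spec_norm A"
    unfolding spec_norm_def using x pos
    by (intro cSup_upper[OF _ spec_norm_bdd_above]) (auto simp: vnorm_smult)
  moreover have "vnorm (A *\<^sub>v ?y) = vnorm (A *\<^sub>v x) / vnorm x"
    using x pos by (simp add: mult_mat_vec[of _ "dim_row A" "dim_col A"] vnorm_smult)
  ultimately show ?thesis
    using pos by (simp add: divide_le_eq mult.commute)
qed

lemma spec_norm_le:
  assumes "0 \<le> c" and bound: "\<And>x. x \<in> carrier_vec (dim_col A) \<Longrightarrow> vnorm (A *\<^sub>v x) \<le> c * vnorm x"
  shows "spec_norm A \<le> c"
  unfolding spec_norm_def
proof (rule cSup_least)
  fix y assume "y \<in> insert 0 {vnorm (A *\<^sub>v x) | x. x \<in> carrier_vec (dim_col A) \<and> vnorm x = 1}"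
  then consider "y = 0" | x where "x \<in> carrier_vec (dim_col A)" "vnorm x = 1" "y = vnorm (A *\<^sub>v x)"
    by blast
  thus "y \<le> c"
  proof cases
    case 2
    thus ?thesis
      using bound[of x] by simp
  qed (use assms in simp)
qed simp

lemma vnorm_le_spec_norm_left_inverse:
  assumes XA: "X * A = 1\<^sub>m r" and A: "A \<in> carrier_mat k r" and X: "X \<in> carrier_mat r k"
    and z: "z \<in> carrier_vec r"
  shows "vnorm z \<le> spec_norm X * vnorm (A *\<^sub>v z)"
proof -
  have "X *\<^sub>v (A *\<^sub>v z) = z"
    using assoc_mult_mat_vec[OF X A z, symmetric] XA z by simp
  moreover have "vnorm (X *\<^sub>v (A *\<^sub>v z)) \<le> spec_norm X * vnorm (A *\<^sub>v z)"
    using A X z by (intro vnorm_mult_vec_le_spec_norm) simp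
  ultimately show ?thesis
    by simp
qed

text \<open>Associativity and cancellation with dimension side conditions instead of carrier
  membership, so that the simplifier can discharge them.\<close>

lemma mult_mat_assoc_dim:
  "dim_col (A :: 'a :: semiring_0 mat) = dim_row B \<Longrightarrow> dim_col B = dim_row C \<Longrightarrow> A * B * C = A * (B * C)"
  by (rule assoc_mult_mat[of A "dim_row A" "dim_col A" B "dim_col B" C "dim_col C"]) auto

lemma mult_mat_vec_assoc_dim:
  "dim_col (A :: 'a :: semiring_0 mat) = dim_row B \<Longrightarrow> dim_col B = dim_vec v \<Longrightarrow> A * B *\<^sub>v v = A *\<^sub>v (B *\<^sub>v v)"
  by (rule assoc_mult_mat_vec[of A "dim_row A" "dim_col A" B "dim_col B" v]) auto

lemma transpose_mult_dim:
  "dim_col (A :: 'a :: comm_semiring_0 mat) = dim_row B \<Longrightarrow> transpose_mat (A * B) = transpose_mat B * transpose_mat A"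
  by (rule transpose_mult[of A "dim_row A" "dim_col A" B "dim_col B"]) auto

lemma mult_mat_cancel_left:
  assumes "(A :: 'a :: semiring_1 mat) * B = 1\<^sub>m n" "dim_col A = dim_row B" "dim_col B = dim_row D"
  shows "A * (B * D) = D"
proof -
  have "dim_row D = n"
    using arg_cong[OF assms(1), of dim_col] assms(3) by simp
  have "A * (B * D) = A * B * D"
    by (rule mult_mat_assoc_dim[symmetric, OF assms(2,3)])
  also have "\<dots> = D"
    unfolding assms(1) using \<open>dim_row D = n\<close> by (rule left_mult_one_mat')
  finally show ?thesis .
qed

lemma mult_mat_vec_cancel_left:
  assumes "(A :: 'a :: semiring_1 mat) * B = 1\<^sub>m n" "dim_col A = dim_row B" "dim_col B = dim_vec v"
  shows "A *\<^sub>v (B *\<^sub>v v) = v"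
proof -
  have "dim_col B = n"
    using arg_cong[OF assms(1), of dim_col] by simp
  hence "v \<in> carrier_vec n"
    using assms(3) by (intro carrier_vecI) linarith
  have "A *\<^sub>v (B *\<^sub>v v) = A * B *\<^sub>v v"
    by (rule mult_mat_vec_assoc_dim[symmetric, OF assms(2,3)])
  also have "\<dots> = v"
    unfolding assms(1) using \<open>v \<in> carrier_vec n\<close> by (rule one_mult_mat_vec)
  finally show ?thesis .
qed

lemma vnorm_isometry:
  assumes W: "W \<in> carrier_mat k r" and W_orth: "transpose_mat W * W = 1\<^sub>m r" and x: "x \<in> carrier_vec r"
  shows "vnorm (W *\<^sub>v x) = vnorm x"
proof -
  have "(W *\<^sub>v x) \<bullet> (W *\<^sub>v x) = (transpose_mat W *\<^sub>v (W *\<^sub>v x)) \<bullet> x"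
    using transpose_vec_mult_scalar[OF W x, of "W *\<^sub>v x"] W x by simp
  also have "transpose_mat W *\<^sub>v (W *\<^sub>v x) = x"
    using W x by (intro mult_mat_vec_cancel_left[OF W_orth]) auto
  finally show ?thesis
    by (metis vnorm_square vnorm_nonneg power2_eq_imp_eq)
qed

lemma vnorm_transpose_isometry_le:
  assumes W: "W \<in> carrier_mat k r" and W_orth: "transpose_mat W * W = 1\<^sub>m r" and y: "y \<in> carrier_vec k"
  shows "vnorm (transpose_mat W *\<^sub>v y) \<le> vnorm y"
proof -
  let ?z = "transpose_mat W *\<^sub>v y"
  have z: "?z \<in> carrier_vec r"
    using W y by simp
  have "(vnorm ?z)\<^sup>2 = y \<bullet> (W *\<^sub>v ?z)"
    unfolding vnorm_square by (rule transpose_vec_mult_scalar[OF W z y])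
  also have "\<dots> \<le> vnorm y * vnorm ?z"
    using abs_scalar_prod_le_vnorm[of y "W *\<^sub>v ?z"] W y vnorm_isometry[OF W W_orth z] by auto
  finally have "vnorm ?z * vnorm ?z \<le> vnorm y * vnorm ?z"
    by (simp add: power2_eq_square)
  thus ?thesis
    using vnorm_nonneg[of ?z] vnorm_nonneg[of y]
    by (cases "vnorm ?z = 0") (simp_all add: mult_le_cancel_right)
qed

lemma isometry_factor_orthogonal:
  fixes W N :: "'a :: field mat"
  assumes W: "W \<in> carrier_mat k r" and W_orth: "transpose_mat W * W = 1\<^sub>m r"
    and N: "N \<in> carrier_mat r r" and WN_orth: "transpose_mat (W * N) * (W * N) = 1\<^sub>m r"
  shows "transpose_mat N * N = 1\<^sub>m r" "N * transpose_mat N = 1\<^sub>m r"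
proof -
  show NN: "transpose_mat N * N = 1\<^sub>m r"
    using WN_orth W N
    by (simp add: transpose_mult_dim mult_mat_assoc_dim mult_mat_cancel_left[OF W_orth])
  show "N * transpose_mat N = 1\<^sub>m r"
    using N by (intro mat_mult_left_right_inverse[OF _ N NN]) simp
qed

definition penrose_conditions :: "real mat \<Rightarrow> real mat \<Rightarrow> bool" where
  "penrose_conditions A X \<longleftrightarrow> X \<in> carrier_mat (dim_col A) (dim_row A) \<and>
      A * X * A = A \<and> X * A * X = X \<and>
      transpose_mat (A * X) = A * X \<and> transpose_mat (X * A) = X * A"

lemma penrose_conditions_unique:
  assumes A: "A \<in> carrier_mat p q" and X: "penrose_conditions A X" and Y: "penrose_conditions A Y"
  shows "X = Y"
proof -
  have dims: "dim_row A = p" "dim_col A = q" "dim_row X = q" "dim_col X = p" "dim_row Y = q" "dim_col Y = p"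
    using A X Y unfolding penrose_conditions_def by auto
  have AXA: "A * X * A = A" and XAX: "X * A * X = X"
    and AX: "transpose_mat (A * X) = A * X" and XA: "transpose_mat (X * A) = X * A"
    using X unfolding penrose_conditions_def by auto
  have AYA: "A * Y * A = A" and YAY: "Y * A * Y = Y"
    and AY: "transpose_mat (A * Y) = A * Y" and YA: "transpose_mat (Y * A) = Y * A"
    using Y unfolding penrose_conditions_def by auto
  note simps = dims mult_mat_assoc_dim transpose_mult_dim
  have "X = X * transpose_mat (A * X)"
    using XAX AX by (simp add: simps)
  also have "\<dots> = X * transpose_mat X * transpose_mat (A * Y * A)"
    using AYA by (simp add: simps)
  also have "\<dots> = X * transpose_mat (A * X) * transpose_mat (A * Y)"
    by (simp add: simps)
  also have "\<dots> = X * A * Y"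
    using AX AY XAX by (simp add: simps flip: mult_mat_assoc_dim)
  finally have X_eq: "X = X * A * Y" .
  have "Y = transpose_mat (Y * A) * Y"
    using YAY YA by (simp add: simps)
  also have "\<dots> = transpose_mat (A * X * A) * transpose_mat Y * Y"
    using AXA by (simp add: simps)
  also have "\<dots> = transpose_mat (X * A) * transpose_mat (Y * A) * Y"
    by (simp add: simps)
  also have "\<dots> = X * A * (Y * A) * Y"
    using XA YA by simp
  also have "\<dots> = X * A * (Y * A * Y)"
    by (simp add: simps)
  also have "\<dots> = X * A * Y"
    using YAY by simp
  finally show ?thesis
    using X_eq by simp
qed

lemma pinv_eqI:
  assumes "A \<in> carrier_mat p q" and "penrose_conditions A X"
  shows "pinv A = X"
  unfolding pinv_def penrose_conditions_def[symmetric]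
  using assms penrose_conditions_unique by blast

text \<open>Only invertibility of S is required, not diagonality: the locale is also applied to
  VJ = VC M with M invertible and V = 1.\<close>

locale svd_form =
  fixes A W S S' V :: "real mat" and p q r :: nat
  assumes W_carrier: "W \<in> carrier_mat p r" and S_carrier: "S \<in> carrier_mat r r"
    and S'_carrier: "S' \<in> carrier_mat r r" and V_carrier: "V \<in> carrier_mat q r"
    and W_orth: "transpose_mat W * W = 1\<^sub>m r" and V_orth: "transpose_mat V * V = 1\<^sub>m r"
    and S_S': "S * S' = 1\<^sub>m r" and S'_S: "S' * S = 1\<^sub>m r"
    and A_eq: "A = W * S * transpose_mat V"
begin

lemma dims:
  "dim_row W = p" "dim_col W = r" "dim_row S = r" "dim_col S = r"
  "dim_row S' = r" "dim_col S' = r" "dim_row V = q" "dim_col V = r"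
  using W_carrier S_carrier S'_carrier V_carrier by auto

lemmas svd_simps = dims mult_mat_assoc_dim mult_mat_vec_assoc_dim
  mult_mat_cancel_left[OF W_orth] mult_mat_cancel_left[OF V_orth]
  mult_mat_cancel_left[OF S_S'] mult_mat_cancel_left[OF S'_S]
  mult_mat_vec_cancel_left[OF W_orth] mult_mat_vec_cancel_left[OF V_orth]
  mult_mat_vec_cancel_left[OF S_S'] mult_mat_vec_cancel_left[OF S'_S]
  W_orth V_orth S_S' S'_S

lemma A_carrier: "A \<in> carrier_mat p q"
  unfolding A_eq using dims by auto

lemma A_mult_V: "A * V = W * S"
  unfolding A_eq by (simp add: svd_simps)

lemma transpose_W_mult_A: "transpose_mat W * A = S * transpose_mat V"
  unfolding A_eq by (simp add: svd_simps)

lemma transpose_A: "transpose_mat A = V * transpose_mat S * transpose_mat W"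
  unfolding A_eq by (simp add: dims transpose_mult_dim mult_mat_assoc_dim)

lemma pinv_eq: "pinv A = V * S' * transpose_mat W"
proof (rule pinv_eqI[OF A_carrier])
  have AX: "A * (V * S' * transpose_mat W) = W * transpose_mat W"
    unfolding A_eq by (simp add: svd_simps)
  have XA: "V * S' * transpose_mat W * A = V * transpose_mat V"
    unfolding A_eq by (simp add: svd_simps)
  show "penrose_conditions A (V * S' * transpose_mat W)"
    unfolding penrose_conditions_def AX XA
    using A_carrier by (auto simp: A_eq svd_simps transpose_mult_dim)
qed

lemma pinv_carrier: "pinv A \<in> carrier_mat q p"
  unfolding pinv_eq using dims by auto

lemma pinv_mult_A: "pinv A * A = V * transpose_mat V"
  unfolding pinv_eq by (simp add: A_eq svd_simps)

lemma vnorm_S_le: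
  assumes w: "w \<in> carrier_vec r"
  shows "vnorm (S *\<^sub>v w) \<le> spec_norm A * vnorm w"
proof -
  have "vnorm (S *\<^sub>v w) = vnorm (W *\<^sub>v (S *\<^sub>v w))"
    using w S_carrier by (intro vnorm_isometry[OF W_carrier W_orth, symmetric]) simp
  also have "W *\<^sub>v (S *\<^sub>v w) = A *\<^sub>v (V *\<^sub>v w)"
    using w by (simp add: A_eq svd_simps)
  also have "vnorm (A *\<^sub>v (V *\<^sub>v w)) \<le> spec_norm A * vnorm (V *\<^sub>v w)"
    using A_carrier V_carrier w by (intro vnorm_mult_vec_le_spec_norm) (simp add: dims)
  finally show ?thesis
    using vnorm_isometry[OF V_carrier V_orth w] by simp
qed

lemma vnorm_le_pinv_S:
  assumes w: "w \<in> carrier_vec r"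
  shows "vnorm w \<le> spec_norm (pinv A) * vnorm (S *\<^sub>v w)"
proof -
  have "vnorm w = vnorm (pinv A *\<^sub>v (W *\<^sub>v (S *\<^sub>v w)))"
    using w vnorm_isometry[OF V_carrier V_orth w] by (simp add: pinv_eq svd_simps)
  also have "\<dots> \<le> spec_norm (pinv A) * vnorm (W *\<^sub>v (S *\<^sub>v w))"
    using w W_carrier S_carrier by (intro vnorm_mult_vec_le_spec_norm) (simp add: pinv_eq dims)
  also have "vnorm (W *\<^sub>v (S *\<^sub>v w)) = vnorm (S *\<^sub>v w)"
    using w S_carrier by (intro vnorm_isometry[OF W_carrier W_orth]) simp
  finally show ?thesis .
qed

lemma spec_norm_pinv_le:
  assumes c: "0 \<le> c" and bound: "\<And>w. w \<in> carrier_vec r \<Longrightarrow> vnorm w \<le> c * vnorm (S *\<^sub>v w)"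
  shows "spec_norm (pinv A) \<le> c"
proof (rule spec_norm_le[OF c])
  fix x :: "real vec" assume "x \<in> carrier_vec (dim_col (pinv A))"
  hence x: "x \<in> carrier_vec p"
    by (simp add: pinv_eq dims)
  define w where "w = S' *\<^sub>v (transpose_mat W *\<^sub>v x)"
  have w: "w \<in> carrier_vec r"
    unfolding w_def using x W_carrier S'_carrier by simp
  have "vnorm (pinv A *\<^sub>v x) = vnorm w"
    unfolding w_def using x vnorm_isometry[OF V_carrier V_orth w] by (simp add: pinv_eq svd_simps w_def)
  also have "\<dots> \<le> c * vnorm (transpose_mat W *\<^sub>v x)"
    using bound[OF w] x by (simp add: w_def svd_simps)
  also have "\<dots> \<le> c * vnorm x"
    using vnorm_transpose_isometry_le[OF W_carrier W_orth x] c by (rule mult_left_mono)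
  finally show "vnorm (pinv A *\<^sub>v x) \<le> c * vnorm x" .
qed

end

lemma compact_svd_imp_svd_form:
  assumes "compact_svd A r W S V"
  obtains S' where "svd_form A W S S' V (dim_row A) (dim_col A) r"
proof -
  have S: "S \<in> carrier_mat r r"
    using assms unfolding compact_svd_def by blast
  have "upper_triangular S"
    using assms unfolding compact_svd_def diagonal_mat_def by auto
  hence "det S = prod_list (diag_mat S)"
    using S by (rule det_upper_triangular)
  also have "\<dots> \<noteq> 0"
    using assms S by (auto simp: compact_svd_def diag_mat_def)
  finally have "S \<in> Units (ring_mat TYPE(real) r undefined)"
    by (rule det_non_zero_imp_unit[OF S])
  then obtain S' where S': "S' \<in> carrier_mat r r" "S * S' = 1\<^sub>m r" "S' * S = 1\<^sub>m r"
    unfolding Units_def ring_mat_def by auto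
  have "svd_form A W S S' V (dim_row A) (dim_col A) r"
    by unfold_locales (use assms S' in \<open>auto simp: compact_svd_def\<close>)
  thus ?thesis
    by (rule that)
qed

lemma transpose_diagonal_mat:
  assumes "S \<in> carrier_mat r r" "diagonal_mat S"
  shows "transpose_mat S = S"
proof (rule eq_matI)
  fix i j assume "i < dim_row S" "j < dim_col S"
  thus "transpose_mat S $$ (i, j) = S $$ (i, j)"
    using assms unfolding diagonal_mat_def by (cases "i = j") auto
qed (use assms in auto)

lemma compact_svd_transpose_S:
  assumes "compact_svd A r W S V"
  shows "transpose_mat S = S"
  using assms unfolding compact_svd_def by (intro transpose_diagonal_mat) auto

lemma card_submatrix_index_set:
  assumes "J \<subseteq> {..<k}"
  shows "card {j. j < k \<and> j \<in> J} = card J"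
proof -
  have "{j. j < k \<and> j \<in> J} = J"
    using assms by auto
  thus ?thesis
    by simp
qed

lemma row_submatrix_rows:
  assumes J: "J \<subseteq> {..<dim_row B}" and i: "i < card J"
  shows "row (submatrix B J UNIV) i = row B (pick J i)" "pick J i < dim_row B"
proof -
  have i': "i < card {j. j < dim_row B \<and> j \<in> J}"
    using i card_submatrix_index_set[OF J] by simp
  show "row (submatrix B J UNIV) i = row B (pick J i)"
    by (rule row_submatrix_UNIV[OF i'])
  show "pick J i < dim_row B"
    by (rule pick_le[OF i'])
qed

lemma submatrix_cols_mult_transpose:
  assumes A: "A \<in> carrier_mat m r" and B: "B \<in> carrier_mat n r" and J: "J \<subseteq> {..<n}"
  shows "submatrix (A * transpose_mat B) UNIV J = A * transpose_mat (submatrix B J UNIV)"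
proof (rule eq_matI)
  have card: "card {j. j < n \<and> j \<in> J} = card J"
    by (rule card_submatrix_index_set[OF J])
  show "dim_row (submatrix (A * transpose_mat B) UNIV J) = dim_row (A * transpose_mat (submatrix B J UNIV))"
    "dim_col (submatrix (A * transpose_mat B) UNIV J) = dim_col (A * transpose_mat (submatrix B J UNIV))"
    using A B card by (simp_all add: dim_submatrix)
  fix i j assume "i < dim_row (A * transpose_mat (submatrix B J UNIV))"
    and "j < dim_col (A * transpose_mat (submatrix B J UNIV))"
  hence i: "i < m" and j: "j < card J"
    using A B card by (auto simp: dim_submatrix)
  have row_j: "row (submatrix B J UNIV) j = row B (pick J j)" and pj: "pick J j < n"
    using row_submatrix_rows[of J B j] B J j by auto
  have "submatrix (A * transpose_mat B) UNIV J $$ (i, j) = (A * transpose_mat B) $$ (i, pick J j)"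
    using submatrix_index[of i "A * transpose_mat B" UNIV j J] i j card A B by (simp add: pick_UNIV)
  also have "\<dots> = row A i \<bullet> row B (pick J j)"
    using i pj A B by simp
  also have "\<dots> = (A * transpose_mat (submatrix B J UNIV)) $$ (i, j)"
    using i j A B card row_j by (simp add: dim_submatrix)
  finally show "submatrix (A * transpose_mat B) UNIV J $$ (i, j) = (A * transpose_mat (submatrix B J UNIV)) $$ (i, j)" .
qed

lemma transpose_mult_unit_vec:
  assumes "i < dim_row (A :: 'a :: semiring_1 mat)"
  shows "transpose_mat A *\<^sub>v unit_vec (dim_row A) i = row A i"
  using assms by (intro eq_vecI) (simp_all add: scalar_prod_right_unit)

locale column_submatrix =
  L: svd_form L WL SL SL' VL m n r + C: svd_form "submatrix L UNIV J" WC SC SC' VC m "card J" r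
  for L WL SL SL' VL WC SC SC' VC :: "real mat" and m n r :: nat and J :: "nat set" +
  assumes J_subset: "J \<subseteq> {..<n}"
    and SL_sym: "transpose_mat SL = SL" and SC_sym: "transpose_mat SC = SC"
begin

abbreviation C where "C \<equiv> submatrix L UNIV J"

abbreviation VJ where "VJ \<equiv> submatrix VL J UNIV"

lemma VJ_carrier: "VJ \<in> carrier_mat (card J) r"
proof (rule carrier_matI)
  show "dim_row VJ = card J"
    unfolding dim_submatrix using L.V_carrier card_submatrix_index_set[OF J_subset]
    by (metis carrier_matD(1))
  show "dim_col VJ = r"
    unfolding dim_submatrix using L.V_carrier by simp
qed

lemma VJ_dims: "dim_row VJ = card J" "dim_col VJ = r"
  using VJ_carrier by auto

lemma C_eq: "C = WL * SL * transpose_mat VJ"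
  unfolding L.A_eq
  by (rule submatrix_cols_mult_transpose[OF _ L.V_carrier J_subset])
    (use L.W_carrier L.S_carrier in auto)

lemma transpose_C: "transpose_mat C = VJ * SL * transpose_mat WL"
  unfolding C_eq by (simp add: transpose_mult_dim mult_mat_assoc_dim L.dims VJ_dims SL_sym)

lemma WC_factor:
  obtains N where "N \<in> carrier_mat r r" "transpose_mat N * N = 1\<^sub>m r" "N * transpose_mat N = 1\<^sub>m r"
    "WC = WL * N"
proof -
  define N where "N = SL * transpose_mat VJ * VC * SC'"
  have N: "N \<in> carrier_mat r r"
    unfolding N_def using L.S_carrier VJ_carrier C.V_carrier C.S'_carrier by auto
  have "WC = C * VC * SC'"
    by (simp add: C.A_mult_V C.svd_simps)
  also have "\<dots> = WL * N"
    unfolding C_eq N_def by (simp add: C.svd_simps L.dims VJ_dims)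
  finally have WC: "WC = WL * N" .
  show ?thesis
    using isometry_factor_orthogonal[OF L.W_carrier L.W_orth N] C.W_orth WC N that by simp
qed

context
  fixes N :: "real mat"
  assumes N: "N \<in> carrier_mat r r" and N_orth: "transpose_mat N * N = 1\<^sub>m r" "N * transpose_mat N = 1\<^sub>m r"
    and WC_eq: "WC = WL * N"
begin

lemmas N_simps = N[THEN carrier_matD(1)] N[THEN carrier_matD(2)] N_orth
  mult_mat_cancel_left[OF N_orth(1)] mult_mat_cancel_left[OF N_orth(2)]

lemma VC_SC_eq: "VC * SC = VJ * SL * N"
proof -
  have "VC * SC = transpose_mat C * WC"
    unfolding C.transpose_A SC_sym by (simp add: C.svd_simps)
  also have "\<dots> = VJ * SL * N"
    unfolding transpose_C WC_eq by (simp add: L.svd_simps N_simps VJ_dims)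
  finally show ?thesis .
qed

lemma SC_transpose_VC_eq: "SC * transpose_mat VC = transpose_mat N * SL * transpose_mat VJ"
proof -
  have "SC * transpose_mat VC = transpose_mat WC * C"
    by (rule C.transpose_W_mult_A[symmetric])
  also have "\<dots> = transpose_mat N * SL * transpose_mat VJ"
    unfolding WC_eq C_eq by (simp add: transpose_mult_dim L.svd_simps N_simps VJ_dims)
  finally show ?thesis .
qed

lemma VJ_eq: "VJ = VC * (SC * transpose_mat N * SL')"
proof -
  have "VJ = VJ * SL * N * transpose_mat N * SL'"
    by (simp add: L.svd_simps N_simps VJ_dims)
  also have "\<dots> = VC * (SC * transpose_mat N * SL')"
    unfolding VC_SC_eq[symmetric] by (simp add: C.svd_simps L.dims N_simps)
  finally show ?thesis .
qed

end

lemma pinv_VJ: "pinv VJ \<in> carrier_mat r (card J)" "pinv VJ * VJ = 1\<^sub>m r"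
proof -
  obtain N where N: "N \<in> carrier_mat r r" "transpose_mat N * N = 1\<^sub>m r" "N * transpose_mat N = 1\<^sub>m r"
    "WC = WL * N"
    by (rule WC_factor)
  have "svd_form VJ VC (SC * transpose_mat N * SL') (SL * N * SC') (1\<^sub>m r) (card J) r r"
  proof
    show "SC * transpose_mat N * SL' * (SL * N * SC') = 1\<^sub>m r"
      "SL * N * SC' * (SC * transpose_mat N * SL') = 1\<^sub>m r"
      using N by (simp_all add: L.svd_simps C.svd_simps N_simps)
    show "VJ = VC * (SC * transpose_mat N * SL') * transpose_mat (1\<^sub>m r)"
      using VJ_eq[OF N] N C.S_carrier L.S'_carrier by simp
  qed (use N C.V_carrier C.V_orth C.S_carrier C.S'_carrier L.S_carrier L.S'_carrier in auto)
  thus "pinv VJ \<in> carrier_mat r (card J)" "pinv VJ * VJ = 1\<^sub>m r"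
    using svd_form.pinv_carrier svd_form.pinv_mult_A by fastforce+
qed

lemma row_norm_WC: "vnorm (transpose_mat WC *\<^sub>v unit_vec m i) = vnorm (transpose_mat WL *\<^sub>v unit_vec m i)"
proof -
  obtain N where N: "N \<in> carrier_mat r r" "transpose_mat N * N = 1\<^sub>m r" "N * transpose_mat N = 1\<^sub>m r"
    "WC = WL * N"
    by (rule WC_factor)
  have "transpose_mat WC *\<^sub>v unit_vec m i = transpose_mat N *\<^sub>v (transpose_mat WL *\<^sub>v unit_vec m i)"
    using N L.W_carrier by (simp add: transpose_mult_dim mult_mat_vec_assoc_dim)
  also have "vnorm \<dots> = vnorm (transpose_mat WL *\<^sub>v unit_vec m i)"
    using N L.W_carrier by (intro vnorm_isometry[of _ r r]) auto
  finally show ?thesis .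
qed

lemma row_norm_VC_le:
  assumes y: "y \<in> carrier_vec (card J)"
  shows "vnorm (transpose_mat VC *\<^sub>v y) \<le> spec_norm (pinv C) * spec_norm L * vnorm (transpose_mat VJ *\<^sub>v y)"
proof -
  obtain N where N: "N \<in> carrier_mat r r" "transpose_mat N * N = 1\<^sub>m r" "N * transpose_mat N = 1\<^sub>m r"
    "WC = WL * N"
    by (rule WC_factor)
  let ?z = "transpose_mat VJ *\<^sub>v y"
  have z: "?z \<in> carrier_vec r" and SLz: "SL *\<^sub>v ?z \<in> carrier_vec r"
    using y VJ_carrier L.S_carrier by auto
  have "vnorm (transpose_mat VC *\<^sub>v y) \<le> spec_norm (pinv C) * vnorm (SC *\<^sub>v (transpose_mat VC *\<^sub>v y))"
    using y C.V_carrier by (intro C.vnorm_le_pinv_S) simp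
  also have "SC *\<^sub>v (transpose_mat VC *\<^sub>v y) = transpose_mat N *\<^sub>v (SL *\<^sub>v ?z)"
    using SC_transpose_VC_eq[OF N] y N C.V_carrier
    by (simp add: C.dims L.dims VJ_dims mult_mat_assoc_dim flip: mult_mat_vec_assoc_dim)
  also have "vnorm \<dots> = vnorm (SL *\<^sub>v ?z)"
    using N SLz by (intro vnorm_isometry[of _ r r]) auto
  also have "spec_norm (pinv C) * \<dots> \<le> spec_norm (pinv C) * (spec_norm L * vnorm ?z)"
    by (intro mult_left_mono L.vnorm_S_le z spec_norm_nonneg)
  finally show ?thesis
    by (simp add: mult.assoc)
qed

lemma spec_norm_pinv_C_le: "spec_norm (pinv C) \<le> spec_norm (pinv L) * spec_norm (pinv VJ)"
proof (rule C.spec_norm_pinv_le)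
  show "0 \<le> spec_norm (pinv L) * spec_norm (pinv VJ)"
    by (simp add: spec_norm_nonneg)
  obtain N where N: "N \<in> carrier_mat r r" "transpose_mat N * N = 1\<^sub>m r" "N * transpose_mat N = 1\<^sub>m r"
    "WC = WL * N"
    by (rule WC_factor)
  fix w :: "real vec" assume w: "w \<in> carrier_vec r"
  let ?u = "SL *\<^sub>v (N *\<^sub>v w)"
  have Nw: "N *\<^sub>v w \<in> carrier_vec r" and u: "?u \<in> carrier_vec r"
    using w N L.S_carrier by auto
  have "vnorm w = vnorm (N *\<^sub>v w)"
    using N w by (intro vnorm_isometry[symmetric, of _ r r]) auto
  also have "\<dots> \<le> spec_norm (pinv L) * vnorm ?u"
    by (rule L.vnorm_le_pinv_S[OF Nw])
  also have "\<dots> \<le> spec_norm (pinv L) * (spec_norm (pinv VJ) * vnorm (VJ *\<^sub>v ?u))"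
    by (intro mult_left_mono vnorm_le_spec_norm_left_inverse[OF pinv_VJ(2) VJ_carrier pinv_VJ(1) u]
        spec_norm_nonneg)
  also have "VJ *\<^sub>v ?u = VC *\<^sub>v (SC *\<^sub>v w)"
    using VC_SC_eq[OF N] w N
    by (simp add: C.dims L.dims VJ_dims mult_mat_assoc_dim flip: mult_mat_vec_assoc_dim)
  also have "vnorm \<dots> = vnorm (SC *\<^sub>v w)"
    using w C.S_carrier by (intro vnorm_isometry[OF C.V_carrier C.V_orth]) simp
  finally show "vnorm w \<le> spec_norm (pinv L) * spec_norm (pinv VJ) * vnorm (SC *\<^sub>v w)"
    by (simp add: mult.assoc)
qed

lemma spec_norm_C_le: "spec_norm C \<le> spec_norm L * sqrt (frobenius_sq VJ)"
proof (rule spec_norm_le)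
  show "0 \<le> spec_norm L * sqrt (frobenius_sq VJ)"
    by (simp add: spec_norm_nonneg)
  fix x :: "real vec" assume "x \<in> carrier_vec (dim_col C)"
  hence x: "x \<in> carrier_vec (card J)"
    using C.A_carrier by simp
  let ?z = "transpose_mat VJ *\<^sub>v x"
  have z: "?z \<in> carrier_vec r"
    using x VJ_carrier by simp
  have "vnorm (C *\<^sub>v x) = vnorm (WL *\<^sub>v (SL *\<^sub>v ?z))"
    unfolding C_eq using x by (simp add: L.dims VJ_dims mult_mat_vec_assoc_dim)
  also have "\<dots> = vnorm (SL *\<^sub>v ?z)"
    using z L.S_carrier by (intro vnorm_isometry[OF L.W_carrier L.W_orth]) simp
  also have "\<dots> \<le> spec_norm L * vnorm ?z"
    by (rule L.vnorm_S_le[OF z])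
  also have "\<dots> \<le> spec_norm L * (sqrt (frobenius_sq VJ) * vnorm x)"
    using vnorm_mult_vec_le_frobenius[of x "transpose_mat VJ"] x VJ_carrier
    by (intro mult_left_mono spec_norm_nonneg) (simp_all add: frobenius_sq_transpose)
  finally show "vnorm (C *\<^sub>v x) \<le> spec_norm L * sqrt (frobenius_sq VJ) * vnorm x"
    by (simp add: mult.assoc)
qed

context
  fixes mu :: real
  assumes incoherent: "\<forall>j<n. vnorm (transpose_mat VL *\<^sub>v unit_vec n j) \<le> sqrt (mu * r / n)"
begin

lemma row_norm_VJ_le:
  assumes i: "i < card J"
  shows "vnorm (transpose_mat VJ *\<^sub>v unit_vec (card J) i) \<le> sqrt (mu * r / n)"
proof -
  have J: "J \<subseteq> {..<dim_row VL}" and n: "dim_row VL = n"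
    using J_subset L.V_carrier by auto
  have "transpose_mat VJ *\<^sub>v unit_vec (card J) i = row VJ i"
    using transpose_mult_unit_vec[of i VJ] i VJ_dims by simp
  also have "\<dots> = row VL (pick J i)"
    by (rule row_submatrix_rows(1)[OF J i])
  also have "\<dots> = transpose_mat VL *\<^sub>v unit_vec n (pick J i)"
    using transpose_mult_unit_vec[of "pick J i" VL] row_submatrix_rows(2)[OF J i] n by simp
  finally show ?thesis
    using incoherent row_submatrix_rows(2)[OF J i] n by simp
qed

lemma row_norm_VC_le_incoherence:
  assumes i: "i < card J"
  shows "vnorm (transpose_mat VC *\<^sub>v unit_vec (card J) i)
    \<le> sqrt (card J / n) * spec_norm (pinv VJ) * cond_num L * sqrt (mu * r / card J)"
proof -
  have "vnorm (transpose_mat VC *\<^sub>v unit_vec (card J) i)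
      \<le> spec_norm (pinv C) * spec_norm L * vnorm (transpose_mat VJ *\<^sub>v unit_vec (card J) i)"
    by (rule row_norm_VC_le) simp
  also have "\<dots> \<le> spec_norm (pinv L) * spec_norm (pinv VJ) * spec_norm L * sqrt (mu * r / n)"
    using spec_norm_pinv_C_le row_norm_VJ_le[OF i]
    by (intro mult_mono mult_right_mono) (simp_all add: spec_norm_nonneg)
  also have "sqrt (mu * r / n) = sqrt (card J / n) * sqrt (mu * r / card J)"
    using i by (simp add: real_sqrt_mult[symmetric])
  finally show ?thesis
    unfolding cond_num_def by (simp add: ac_simps)
qed

lemma cond_num_C_le_incoherence:
  "cond_num C \<le> sqrt (card J / n) * spec_norm (pinv VJ) * sqrt (mu * r) * cond_num L"
proof -
  have "frobenius_sq VJ \<le> card J * (mu * r / n)"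
    using frobenius_sq_le_rows[of VJ "mu * r / n"] row_norm_VJ_le transpose_mult_unit_vec[of _ VJ]
    by (simp add: VJ_dims)
  hence "spec_norm C \<le> spec_norm L * sqrt (card J * (mu * r / n))"
    using spec_norm_C_le mult_left_mono[OF real_sqrt_le_mono spec_norm_nonneg]
    by (meson order_trans)
  hence "cond_num C \<le> spec_norm L * sqrt (card J * (mu * r / n)) * (spec_norm (pinv L) * spec_norm (pinv VJ))"
    unfolding cond_num_def
    using spec_norm_pinv_C_le spec_norm_nonneg[of C] spec_norm_nonneg[of "pinv C"]
    by (meson mult_mono order_trans)
  also have "\<dots> = sqrt (card J / n) * spec_norm (pinv VJ) * sqrt (mu * r) * cond_num L"
    unfolding cond_num_def by (simp add: real_sqrt_mult[symmetric] ac_simps)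
  finally show ?thesis .
qed

end

end

lemma column_submatrix_of_compact_svds:
  assumes L: "L \<in> carrier_mat m n" and L_svd: "compact_svd L r WL SL VL"
    and J: "J \<subseteq> {..<n}" and C_svd: "compact_svd (submatrix L UNIV J) r WC SC VC"
  obtains SL' SC' where "column_submatrix L WL SL SL' VL WC SC SC' VC m n r J"
proof -
  have C_dims: "dim_row (submatrix L UNIV J) = m" "dim_col (submatrix L UNIV J) = card J"
    using L card_submatrix_index_set[OF J] by (simp_all add: dim_submatrix)
  obtain SL' SC' where "svd_form L WL SL SL' VL m n r"
    and "svd_form (submatrix L UNIV J) WC SC SC' VC m (card J) r"
    using compact_svd_imp_svd_form[OF L_svd] compact_svd_imp_svd_form[OF C_svd] L C_dims
    by (metis carrier_matD)
  thus ?thesis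
    using that J compact_svd_transpose_S[OF L_svd] compact_svd_transpose_S[OF C_svd]
    by (simp add: column_submatrix_def column_submatrix_axioms_def)
qed

theorem theorem3p1:
  fixes L WL SL VL WC SC VC :: "real mat" and m n r :: nat and J :: "nat set"
    and mu1 mu2 beta :: real
  assumes L_dim: "L \<in> carrier_mat m n"
    and L_rank: "vec_space.rank m L = r"
    and L_svd: "compact_svd L r WL SL VL"
    and inc1: "\<forall>i<m. vnorm (transpose_mat WL *\<^sub>v unit_vec m i) \<le> sqrt (mu1 * r / m)"
    and inc2: "\<forall>i<n. vnorm (transpose_mat VL *\<^sub>v unit_vec n i) \<le> sqrt (mu2 * r / n)"
    and J_sub: "J \<subseteq> {..<n}"
    and C_rank: "vec_space.rank m (submatrix L UNIV J) = r"
    and C_svd: "compact_svd (submatrix L UNIV J) r WC SC VC"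
    and beta_def: "beta = sqrt (real (card J) / n) * spec_norm (pinv (submatrix VL J UNIV))"
  shows "(\<forall>i<m. vnorm (transpose_mat WC *\<^sub>v unit_vec m i) \<le> sqrt (mu1 * r / m))
       \<and> (\<forall>i<card J. vnorm (transpose_mat VC *\<^sub>v unit_vec (card J) i)
              \<le> beta * cond_num L * sqrt (mu2 * r / card J))
       \<and> cond_num (submatrix L UNIV J) \<le> beta * sqrt (mu2 * r) * cond_num L"
proof -
  obtain SL' SC' where "column_submatrix L WL SL SL' VL WC SC SC' VC m n r J"
    by (rule column_submatrix_of_compact_svds[OF L_dim L_svd J_sub C_svd])
  then interpret column_submatrix L WL SL SL' VL WC SC SC' VC m n r J .
  show ?thesis
    unfolding beta_def
    using row_norm_WC inc1 row_norm_VC_le_incoherence[OF inc2] cond_num_C_le_incoherence[OF inc2]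
    by simp
qed

end
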